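(* Let $k\geq 2$ be an integer and let $B\in M_{4k}(\mathbb{F}_2)$ be a non-derogative matrix. Then there exist $N,D\in M_{4k}(\mathbb{F}_2)$ with $B=N+D$, $N^2=0$ and $D^4=D$.
   Context: A square matrix is non-derogative if its minimal polynomial equals its characteristic polynomial. $\mathbb{F}_2$ denotes the field with two elements. *)

theory Defs
  imports "Jordan_Normal_Form.Char_Poly" "Berlekamp_Zassenhaus.Finite_Field"
begin

text \<open>The field with two elements: integers modulo CARD(bool) = 2.\<close>
type_synonym F2 = "bool mod_ring"

definition poly_mat :: "'a :: comm_ring_1 poly \<Rightarrow> 'a mat \<Rightarrow> 'a mat" where
  "poly_mat p A = foldr (\<lambda>c M. c \<cdot>\<^sub>m 1\<^sub>m (dim_row A) + A * M) (coeffs p)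
                        (0\<^sub>m (dim_row A) (dim_row A))"

definition minimal_poly :: "'a :: field mat \<Rightarrow> 'a poly" where
  "minimal_poly A = (THE p. monic p \<and> poly_mat p A = 0\<^sub>m (dim_row A) (dim_row A) \<and>
      (\<forall>q. q \<noteq> 0 \<longrightarrow> poly_mat q A = 0\<^sub>m (dim_row A) (dim_row A) \<longrightarrow> degree p \<le> degree q))"

definition non_derogatory :: "'a :: field mat \<Rightarrow> bool" where
  "non_derogatory A \<longleftrightarrow> minimal_poly A = char_poly A"

end

(*
  A non-derogatory matrix B has a cyclic vector v: take v whose annihilator f has maximal degree;
  every other annihilator divides f, so f(B) kills all unit vectors and deg f = n. In the basis
  v, Bv, ..., B^(n-1) v the matrix becomes C with C e_j = e_(j+1) for j < n - 1, and an arbitrary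
  last column a.

  For such C we write down D with D^4 = D: D moves the basis vectors along 3-cycles, entered
  through tails of length one, so D^3 fixes every column of D. D agrees with C outside a set J of
  columns and on the rows in J, so C - D is supported in (rows not in J) x (columns in J) and
  squares to zero. The last column of D must agree with a on the rows in J; this is arranged by
  adding vectors that D kills or fixes. Over F2 there are two patterns, one for each value of the
  trace a_(n-1), and n = 4k with k >= 2 leaves room for both.
*)

theory Submission
  imports Defs
begin

lemma mult_unit_vec_col:
  "(A :: 'a::semiring_1 mat) \<in> carrier_mat n m \<Longrightarrow> j < m \<Longrightarrow> A *\<^sub>v unit_vec m j = col A j"
  by (rule eq_vecI) auto

lemma mult_zero_vec_mat: "A \<in> carrier_mat n m \<Longrightarrow> A *\<^sub>v 0\<^sub>v m = 0\<^sub>v n"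
  by (intro eq_vecI) auto

lemma zero_mat_mult_vec: "v \<in> carrier_vec m \<Longrightarrow> 0\<^sub>m n m *\<^sub>v v = 0\<^sub>v n"
  by (intro eq_vecI) auto

lemma index_unit_vec_unbounded: "i < n \<Longrightarrow> unit_vec n m $ i = (if i = m then 1 else 0)"
  by (simp add: unit_vec_def)

lemma mat_of_cols_map_carrier [simp]: "mat_of_cols n (map f [0..<n]) \<in> carrier_mat n n"
  by (metis length_map diff_zero length_upt mat_of_cols_carrier(1))

lemma mat_of_cols_map_index:
  "i < n \<Longrightarrow> j < n \<Longrightarrow> mat_of_cols n (map f [0..<n]) $$ (i, j) = f j $ i"
  unfolding mat_of_cols_def by simp

lemma col_mat_of_cols_map:
  "j < n \<Longrightarrow> f j \<in> carrier_vec n \<Longrightarrow> col (mat_of_cols n (map f [0..<n])) j = f j"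
  by (subst col_mat_of_cols) auto

lemma mat_of_cols_map_mult_unit_vec:
  fixes f :: "nat \<Rightarrow> 'a::semiring_1 vec"
  assumes "j < n" and "f j \<in> carrier_vec n"
  shows "mat_of_cols n (map f [0..<n]) *\<^sub>v unit_vec n j = f j"
  unfolding mult_unit_vec_col[OF mat_of_cols_map_carrier assms(1)] using assms by (rule col_mat_of_cols_map)

lemma finite_carrier_mat: "finite (carrier_mat n m :: 'a::finite mat set)"
proof -
  let ?entries = "\<lambda>A :: 'a mat. restrict (\<lambda>ij. A $$ ij) ({..<n} \<times> {..<m})"
  have "inj_on ?entries (carrier_mat n m)"
  proof (rule inj_onI)
    fix A B :: "'a mat"
    assume A: "A \<in> carrier_mat n m" and B: "B \<in> carrier_mat n m" and eq: "?entries A = ?entries B"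
    show "A = B"
    proof (rule eq_matI)
      fix i j assume "i < dim_row B" "j < dim_col B"
      then have "(i, j) \<in> {..<n} \<times> {..<m}" using B by auto
      then show "A $$ (i, j) = B $$ (i, j)" using fun_cong[OF eq, of "(i, j)"] by simp
    qed (use A B in auto)
  qed
  moreover have "?entries ` carrier_mat n m \<subseteq> ({..<n} \<times> {..<m}) \<rightarrow>\<^sub>E (UNIV :: 'a set)"
    by (simp add: image_subset_iff restrict_PiE_iff)
  ultimately show ?thesis
    by (meson finite_PiE finite_SigmaI finite_lessThan finite_subset inj_on_finite finite)
qed

section \<open>Polynomials evaluated at matrices\<close>

lemma poly_mat_0 [simp]: "poly_mat 0 A = 0\<^sub>m (dim_row A) (dim_row A)"
  unfolding poly_mat_def by simp

lemma poly_mat_pCons: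
  assumes A: "A \<in> carrier_mat n n"
  shows "poly_mat (pCons a p) A = a \<cdot>\<^sub>m 1\<^sub>m n + A * poly_mat p A"
proof (cases "p = 0 \<and> a = 0")
  case True
  then show ?thesis using A by (auto simp: poly_mat_def)
next
  case False
  then have "coeffs (pCons a p) = a # coeffs p"
    by (auto simp: coeffs_pCons_eq_cCons cCons_def)
  then show ?thesis using A unfolding poly_mat_def by simp
qed

lemma poly_mat_carrier [simp]:
  assumes A: "A \<in> carrier_mat n n"
  shows "poly_mat p A \<in> carrier_mat n n"
  by (induction p) (use A in \<open>auto simp: poly_mat_pCons[OF A]\<close>)

lemma poly_mat_dim [simp]:
  "A \<in> carrier_mat n n \<Longrightarrow> dim_row (poly_mat p A) = n"
  "A \<in> carrier_mat n n \<Longrightarrow> dim_col (poly_mat p A) = n"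
  using poly_mat_carrier by blast+

context
  fixes A :: "'a::comm_ring_1 mat" and n :: nat
  assumes A: "A \<in> carrier_mat n n"
begin

lemma poly_mat_add: "poly_mat (p + q) A = poly_mat p A + poly_mat q A"
proof (induction p arbitrary: q)
  case 0
  then show ?case using A by simp
next
  case (pCons a p)
  obtain b q' where q: "q = pCons b q'" by (cases q)
  have P: "poly_mat p A \<in> carrier_mat n n" and Q: "poly_mat q' A \<in> carrier_mat n n" using A by auto
  show ?case
    unfolding q add_pCons poly_mat_pCons[OF A] pCons mult_add_distrib_mat[OF A P Q]
    by (rule eq_matI) (use A in \<open>auto simp: algebra_simps\<close>)
qed

lemma poly_mat_smult: "poly_mat (Polynomial.smult c p) A = c \<cdot>\<^sub>m poly_mat p A"
proof (induction p)
  case 0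
  then show ?case using A by simp
next
  case (pCons a p)
  have P: "poly_mat p A \<in> carrier_mat n n" using A by auto
  show ?case
    unfolding smult_pCons poly_mat_pCons[OF A] pCons mult_smult_distrib[OF A P]
    by (rule eq_matI) (use A in \<open>auto simp: algebra_simps\<close>)
qed

lemma poly_mat_mult: "poly_mat (p * q) A = poly_mat p A * poly_mat q A"
proof (induction p)
  case 0
  then show ?case using A by (simp add: left_mult_zero_mat[of _ n n])
next
  case (pCons a p)
  have P: "poly_mat p A \<in> carrier_mat n n" and Q: "poly_mat q A \<in> carrier_mat n n" using A by auto
  have "poly_mat (pCons a p * q) A = poly_mat (Polynomial.smult a q + pCons 0 (p * q)) A" by simp
  also have "\<dots> = a \<cdot>\<^sub>m poly_mat q A + A * (poly_mat p A * poly_mat q A)"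
    unfolding poly_mat_add poly_mat_smult poly_mat_pCons[OF A] pCons
    by (rule eq_matI) (use A in auto)
  also have "\<dots> = (a \<cdot>\<^sub>m 1\<^sub>m n + A * poly_mat p A) * poly_mat q A"
  proof -
    have I: "a \<cdot>\<^sub>m 1\<^sub>m n \<in> carrier_mat n n" and AP: "A * poly_mat p A \<in> carrier_mat n n"
      using A P by auto
    show ?thesis
      unfolding add_mult_distrib_mat[OF I AP Q] mult_smult_assoc_mat[OF one_carrier_mat Q]
        left_mult_one_mat[OF Q] assoc_mult_mat[OF A P Q] by simp
  qed
  finally show ?case unfolding poly_mat_pCons[OF A] .
qed

lemma poly_mat_diff: "poly_mat (p - q) A = poly_mat p A - poly_mat q A"
proof -
  have sum: "poly_mat (p - q) A + poly_mat q A = poly_mat p A"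
    unfolding poly_mat_add[symmetric] by simp
  show ?thesis
  proof (rule eq_matI)
    fix i j assume "i < dim_row (poly_mat p A - poly_mat q A)" "j < dim_col (poly_mat p A - poly_mat q A)"
    then have "(poly_mat (p - q) A + poly_mat q A) $$ (i, j) = poly_mat p A $$ (i, j)" "i < n" "j < n"
      using A sum by auto
    then show "poly_mat (p - q) A $$ (i, j) = (poly_mat p A - poly_mat q A) $$ (i, j)"
      using A by (simp add: eq_diff_eq)
  qed (use A in auto)
qed

lemma pow_mat_Suc_left: "A ^\<^sub>m Suc j = A * A ^\<^sub>m j"
  by (induction j) (use A in \<open>auto simp: assoc_mult_mat[of _ n n _ n _ n]\<close>)

lemma poly_mat_monom: "poly_mat (Polynomial.monom c k) A = c \<cdot>\<^sub>m A ^\<^sub>m k"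
proof (induction k)
  case 0
  then show ?case using poly_mat_pCons[OF A, of c 0] A by (simp add: monom_0)
next
  case (Suc k)
  have "poly_mat (Polynomial.monom c (Suc k)) A = A * (c \<cdot>\<^sub>m A ^\<^sub>m k)"
    unfolding monom_Suc poly_mat_pCons[OF A] Suc by (rule eq_matI) (use carrier_matD[OF A] in \<open>auto split: if_splits\<close>)
  also have "\<dots> = c \<cdot>\<^sub>m A ^\<^sub>m Suc k"
    unfolding pow_mat_Suc_left using A by (simp add: mult_smult_distrib[of _ n n _ n])
  finally show ?case .
qed

lemma poly_mat_mult_vec:
  "v \<in> carrier_vec n \<Longrightarrow> poly_mat (p * q) A *\<^sub>v v = poly_mat p A *\<^sub>v (poly_mat q A *\<^sub>v v)"
  unfolding poly_mat_mult using A by (simp add: assoc_mult_mat_vec[of _ n n _ n])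

lemma poly_mat_add_mult_vec:
  "v \<in> carrier_vec n \<Longrightarrow> poly_mat (p + q) A *\<^sub>v v = poly_mat p A *\<^sub>v v + poly_mat q A *\<^sub>v v"
  unfolding poly_mat_add using A by (simp add: add_mult_distrib_mat_vec[of _ n n])

lemma poly_mat_mult_vec_carrier [simp]: "poly_mat p A *\<^sub>v v \<in> carrier_vec n"
  by (rule carrier_vecI) (simp add: A)

lemma poly_mat_mult_zero_vec [simp]: "poly_mat p A *\<^sub>v 0\<^sub>v n = 0\<^sub>v n"
  using A by (intro eq_vecI) auto

lemma poly_mat_sum_mult_vec_index:
  assumes v: "v \<in> carrier_vec n" and "finite S" and i: "i < n"
  shows "(poly_mat (\<Sum>j\<in>S. f j) A *\<^sub>v v) $ i = (\<Sum>j\<in>S. (poly_mat (f j) A *\<^sub>v v) $ i)"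
  using \<open>finite S\<close>
proof (induction S rule: finite_induct)
  case empty
  then show ?case using A v i by simp
next
  case (insert j S)
  then show ?case using A v i by (simp add: poly_mat_add_mult_vec)
qed

end

lemma poly_mat_annihilator_exists:
  fixes A :: "'a::{comm_ring_1,finite} mat"
  assumes A: "A \<in> carrier_mat n n"
  shows "\<exists>q. q \<noteq> 0 \<and> poly_mat q A = 0\<^sub>m n n"
proof -
  have "range (\<lambda>k. A ^\<^sub>m k) \<subseteq> carrier_mat n n" using A by auto
  then have "\<not> inj (\<lambda>k. A ^\<^sub>m k)"
    using finite_carrier_mat finite_subset finite_imageD infinite_UNIV_nat by blast
  then obtain i j where ij: "i \<noteq> j" "A ^\<^sub>m i = A ^\<^sub>m j" unfolding inj_def by auto
  let ?q = "Polynomial.monom (1::'a) i - Polynomial.monom 1 j"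
  have "Polynomial.coeff ?q i = 1" using ij(1) by (simp add: Polynomial.coeff_monom)
  then have "?q \<noteq> 0" by (metis one_neq_zero Polynomial.coeff_0)
  moreover have "poly_mat ?q A = 0\<^sub>m n n"
    using A ij(2) by (simp add: poly_mat_diff poly_mat_monom)
  ultimately show ?thesis by blast
qed

lemma minimal_poly_spec:
  fixes A :: "'a::{field,finite} mat"
  assumes A: "A \<in> carrier_mat n n"
  shows "monic (minimal_poly A)" "poly_mat (minimal_poly A) A = 0\<^sub>m n n"
    and "\<And>q. q \<noteq> 0 \<Longrightarrow> poly_mat q A = 0\<^sub>m n n \<Longrightarrow> degree (minimal_poly A) \<le> degree q"
proof -
  let ?ann = "\<lambda>q. q \<noteq> 0 \<and> poly_mat q A = 0\<^sub>m n n"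
  obtain m where m: "?ann m" and least: "\<And>q. ?ann q \<Longrightarrow> degree m \<le> degree q"
    using ex_has_least_nat[of ?ann _ degree] poly_mat_annihilator_exists[OF A] by metis
  define p where "p = Polynomial.smult (inverse (lead_coeff m)) m"
  have p: "monic p" "poly_mat p A = 0\<^sub>m n n" "degree p = degree m"
    using m A by (auto simp: p_def poly_mat_smult)
  let ?P = "\<lambda>r. monic r \<and> poly_mat r A = 0\<^sub>m n n \<and>
    (\<forall>q. q \<noteq> 0 \<longrightarrow> poly_mat q A = 0\<^sub>m n n \<longrightarrow> degree r \<le> degree q)"
  have "?P p" using p least A by auto
  moreover have "r = p" if r: "?P r" for r
  proof (rule ccontr)
    assume "r \<noteq> p"
    moreover have "poly_mat (r - p) A = 0\<^sub>m n n" using r p A by (simp add: poly_mat_diff)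
    ultimately have "degree p \<le> degree (r - p)" using least p by auto
    moreover have "degree r = degree p"
    proof -
      have "r \<noteq> 0" "p \<noteq> 0" using r p by auto
      then have "degree r \<le> degree p" "degree m \<le> degree r" using r p least by auto
      then show ?thesis using p(3) by simp
    qed
    ultimately have "degree (r - p) = degree p" using degree_diff_le[of r "degree p" p] by simp
    with \<open>r \<noteq> p\<close> show False
      using r p \<open>degree r = degree p\<close> by (metis coeff_diff diff_self leading_coeff_0_iff right_minus_eq)
  qed
  ultimately have "minimal_poly A = p"
    unfolding minimal_poly_def carrier_matD(1)[OF A] by (rule the_equality)
  then show "monic (minimal_poly A)" "poly_mat (minimal_poly A) A = 0\<^sub>m n n"
    "\<And>q. q \<noteq> 0 \<Longrightarrow> poly_mat q A = 0\<^sub>m n n \<Longrightarrow> degree (minimal_poly A) \<le> degree q"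
    using p least by auto
qed

lemma non_derogatory_annihilator_degree:
  fixes A :: "'a::{field,finite} mat"
  assumes "A \<in> carrier_mat n n" and "non_derogatory A"
    and "q \<noteq> 0" and "poly_mat q A = 0\<^sub>m n n"
  shows "n \<le> degree q"
  using minimal_poly_spec(3)[OF assms(1,3,4)] degree_monic_char_poly[OF assms(1)] assms(2)
  unfolding non_derogatory_def by simp

section \<open>Cyclic vectors\<close>

definition generates_annihilator :: "'a::comm_ring_1 mat \<Rightarrow> 'a vec \<Rightarrow> 'a poly \<Rightarrow> bool" where
  "generates_annihilator A v f \<longleftrightarrow>
     f \<noteq> 0 \<and> (\<forall>q. poly_mat q A *\<^sub>v v = 0\<^sub>v (dim_row A) \<longleftrightarrow> f dvd q)"

context
  fixes A :: "'a::{field_gcd,finite} mat" and n :: nat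
  assumes A: "A \<in> carrier_mat n n"
begin

lemma generates_annihilatorD: "generates_annihilator A v f \<Longrightarrow> poly_mat q A *\<^sub>v v = 0\<^sub>v n \<longleftrightarrow> f dvd q"
  using A unfolding generates_annihilator_def by auto

lemma generates_annihilator_exists:
  assumes v: "v \<in> carrier_vec n"
  shows "\<exists>f. generates_annihilator A v f"
proof -
  let ?kills = "\<lambda>q. q \<noteq> 0 \<and> poly_mat q A *\<^sub>v v = 0\<^sub>v n"
  obtain q0 where "q0 \<noteq> 0" "poly_mat q0 A = 0\<^sub>m n n"
    using poly_mat_annihilator_exists[OF A] by blast
  then have "?kills q0" using v by auto
  then obtain f where f: "?kills f" and least: "\<And>q. ?kills q \<Longrightarrow> degree f \<le> degree q"
    using ex_has_least_nat[of ?kills _ degree] by metis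
  have "poly_mat q A *\<^sub>v v = 0\<^sub>v n \<longleftrightarrow> f dvd q" for q
  proof
    assume q: "poly_mat q A *\<^sub>v v = 0\<^sub>v n"
    have "poly_mat q A *\<^sub>v v = poly_mat (q div f) A *\<^sub>v (poly_mat f A *\<^sub>v v) + poly_mat (q mod f) A *\<^sub>v v"
      using v by (simp flip: poly_mat_add_mult_vec[OF A] poly_mat_mult_vec[OF A])
    then have "poly_mat (q mod f) A *\<^sub>v v = 0\<^sub>v n" using q f v A by simp
    then have "q mod f = 0" using least degree_mod_less'[of f q] f by fastforce
    then show "f dvd q" by (simp add: dvd_eq_mod_eq_0)
  next
    assume "f dvd q"
    then obtain t where "q = t * f" by (metis dvd_def mult.commute)
    then show "poly_mat q A *\<^sub>v v = 0\<^sub>v n" using f v A by (simp add: poly_mat_mult_vec[OF A])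
  qed
  then show ?thesis using f A unfolding generates_annihilator_def by auto
qed

lemma generates_annihilator_factor:
  assumes v: "v \<in> carrier_vec n" and gen: "generates_annihilator A v (g * h)"
  shows "generates_annihilator A (poly_mat g A *\<^sub>v v) h"
proof -
  have "g \<noteq> 0" "h \<noteq> 0" using gen unfolding generates_annihilator_def by auto
  then have "poly_mat q A *\<^sub>v (poly_mat g A *\<^sub>v v) = 0\<^sub>v n \<longleftrightarrow> h dvd q" for q
    unfolding poly_mat_mult_vec[OF A v, symmetric] generates_annihilatorD[OF gen]
    by (simp add: mult.commute[of g])
  then show ?thesis using \<open>h \<noteq> 0\<close> A unfolding generates_annihilator_def by auto
qed

lemma generates_annihilator_add:
  assumes x: "x \<in> carrier_vec n" and y: "y \<in> carrier_vec n"
    and f: "generates_annihilator A x f" and g: "generates_annihilator A y g"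
    and "coprime f g"
  shows "generates_annihilator A (x + y) (f * g)"
proof -
  have split: "poly_mat q A *\<^sub>v (x + y) = poly_mat q A *\<^sub>v x + poly_mat q A *\<^sub>v y" for q
    using A x y by (simp add: mult_add_distrib_mat_vec[of _ n n])
  have "poly_mat q A *\<^sub>v (x + y) = 0\<^sub>v n \<longleftrightarrow> f * g dvd q" for q
  proof
    assume q: "poly_mat q A *\<^sub>v (x + y) = 0\<^sub>v n"
    have "poly_mat (g * q) A *\<^sub>v y = 0\<^sub>v n"
      using generates_annihilatorD[OF g] by simp
    then have "poly_mat (g * q) A *\<^sub>v x = poly_mat (g * q) A *\<^sub>v (x + y)"
      using split[of "g * q"] A x by simp
    also have "\<dots> = 0\<^sub>v n"
      using q x y A by (simp add: poly_mat_mult_vec[OF A])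
    finally have "f dvd g * q" using generates_annihilatorD[OF f] by simp
    then have fq: "f dvd q" using \<open>coprime f g\<close> by (simp add: coprime_dvd_mult_right_iff)
    then have "poly_mat q A *\<^sub>v x = 0\<^sub>v n" using generates_annihilatorD[OF f] by simp
    then have "poly_mat q A *\<^sub>v y = 0\<^sub>v n" using q split[of q] A y by simp
    then have "g dvd q" using generates_annihilatorD[OF g] by simp
    with fq show "f * g dvd q" using \<open>coprime f g\<close> by (simp add: divides_mult)
  next
    assume "f * g dvd q"
    then have "f dvd q" "g dvd q" by (auto intro: dvd_mult_left dvd_mult_right)
    then have "poly_mat q A *\<^sub>v x = 0\<^sub>v n" "poly_mat q A *\<^sub>v y = 0\<^sub>v n"
      using generates_annihilatorD[OF f] generates_annihilatorD[OF g] by simp_all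
    then show "poly_mat q A *\<^sub>v (x + y) = 0\<^sub>v n" using split[of q] by simp
  qed
  moreover have "f * g \<noteq> 0" using f g unfolding generates_annihilator_def by simp
  ultimately show ?thesis using A unfolding generates_annihilator_def by auto
qed

text \<open>If \<open>g\<close> did not divide \<open>f\<close>, some prime \<open>p\<close> would divide \<open>g\<close> more often than \<open>f\<close>; adding
  the \<open>p\<close>-free part of \<open>v\<close> to the \<open>p\<close>-primary part of \<open>w\<close> gives a vector whose annihilator has
  larger degree than \<open>f\<close>.\<close>

lemma max_degree_annihilator_dvd:
  assumes v: "v \<in> carrier_vec n" and f: "generates_annihilator A v f"
    and max: "\<And>u h. u \<in> carrier_vec n \<Longrightarrow> generates_annihilator A u h \<Longrightarrow> degree h \<le> degree f"
    and w: "w \<in> carrier_vec n" and g: "generates_annihilator A w g"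
  shows "g dvd f"
proof (rule ccontr)
  assume "\<not> g dvd f"
  moreover have "f \<noteq> 0" "g \<noteq> 0" using f g unfolding generates_annihilator_def by auto
  ultimately obtain p where p: "prime p" "multiplicity p f < multiplicity p g"
    using multiplicity_le_imp_dvd by (meson not_le)
  define a b where "a = multiplicity p f" and "b = multiplicity p g"
  have "\<not> is_unit p" "p \<noteq> 0" using p(1) not_prime_unit not_prime_0 by blast+
  obtain f' where f': "f = p ^ a * f'" "\<not> p dvd f'"
    using multiplicity_decompose'[OF \<open>f \<noteq> 0\<close> \<open>\<not> is_unit p\<close>] unfolding a_def by metis
  obtain g' where g': "g = g' * p ^ b"
    using multiplicity_dvd[of p g] unfolding b_def by (metis dvd_def mult.commute)
  have "f' \<noteq> 0" using f' \<open>f \<noteq> 0\<close> by auto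
  have "coprime f' (p ^ b)"
    using prime_imp_coprime[OF p(1) f'(2)] by (simp add: coprime_commute)
  moreover have "generates_annihilator A (poly_mat (p ^ a) A *\<^sub>v v) f'"
    using generates_annihilator_factor[OF v] f f'(1) by simp
  moreover have "generates_annihilator A (poly_mat g' A *\<^sub>v w) (p ^ b)"
    using generates_annihilator_factor[OF w] g g' by simp
  ultimately have gen: "generates_annihilator A (poly_mat (p ^ a) A *\<^sub>v v + poly_mat g' A *\<^sub>v w) (f' * p ^ b)"
    using A v w by (intro generates_annihilator_add) auto
  have "degree f = degree f' + a * degree p"
    using f' \<open>f' \<noteq> 0\<close> \<open>p \<noteq> 0\<close> by (simp add: degree_mult_eq degree_power_eq)
  also have "\<dots> < degree (f' * p ^ b)"
  proof -
    have "degree p \<noteq> 0" using \<open>\<not> is_unit p\<close> \<open>p \<noteq> 0\<close> is_unit_iff_degree by blast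
    then show ?thesis
      using p(2) \<open>f' \<noteq> 0\<close> \<open>p \<noteq> 0\<close> unfolding a_def b_def by (simp add: degree_mult_eq degree_power_eq)
  qed
  finally show False using max[OF _ gen] v w A by (simp add: not_le)
qed

lemma max_degree_annihilator_exists:
  obtains v f where "v \<in> carrier_vec n" "generates_annihilator A v f"
    "\<And>u h. u \<in> carrier_vec n \<Longrightarrow> generates_annihilator A u h \<Longrightarrow> degree h \<le> degree f"
proof -
  obtain q0 where q0: "q0 \<noteq> 0" "poly_mat q0 A = 0\<^sub>m n n"
    using poly_mat_annihilator_exists[OF A] by blast
  define degs where "degs = {degree h |h u. u \<in> carrier_vec n \<and> generates_annihilator A u h}"
  have "degree h \<le> degree q0" if "u \<in> carrier_vec n" "generates_annihilator A u h" for u h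
  proof -
    have "poly_mat q0 A *\<^sub>v u = 0\<^sub>v n" using q0(2) that(1) by (intro eq_vecI) auto
    then show ?thesis using generates_annihilatorD[OF that(2)] q0(1) dvd_imp_degree_le by blast
  qed
  then have "degs \<subseteq> {..degree q0}" unfolding degs_def atMost_def by blast
  then have "finite degs" by (rule finite_subset) simp
  moreover obtain f0 where "generates_annihilator A (0\<^sub>v n) f0"
    using generates_annihilator_exists[OF zero_carrier_vec] by blast
  then have "degs \<noteq> {}" unfolding degs_def by (intro ex_in_conv[THEN iffD1] exI CollectI conjI refl) auto
  then have "Max degs \<in> degs" using \<open>finite degs\<close> by (rule Max_in[rotated])
  then obtain v f where v: "v \<in> carrier_vec n" and f: "generates_annihilator A v f"
    and f_max: "degree f = Max degs"
    unfolding degs_def by auto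
  have "degree h \<le> degree f" if "u \<in> carrier_vec n" "generates_annihilator A u h" for u h
    unfolding f_max using that \<open>finite degs\<close> by (intro Max_ge) (auto simp: degs_def)
  then show ?thesis by (rule that[OF v f])
qed

lemma cyclic_vector_exists:
  assumes deg: "\<And>q. q \<noteq> 0 \<Longrightarrow> poly_mat q A = 0\<^sub>m n n \<Longrightarrow> n \<le> degree q"
  shows "\<exists>v \<in> carrier_vec n. \<forall>q. q \<noteq> 0 \<longrightarrow> poly_mat q A *\<^sub>v v = 0\<^sub>v n \<longrightarrow> n \<le> degree q"
proof -
  obtain v f where v: "v \<in> carrier_vec n" and f: "generates_annihilator A v f"
    and max: "\<And>u h. u \<in> carrier_vec n \<Longrightarrow> generates_annihilator A u h \<Longrightarrow> degree h \<le> degree f"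
    using max_degree_annihilator_exists by blast
  have "col (poly_mat f A) j = col (0\<^sub>m n n) j" if "j < n" for j
  proof -
    obtain g where g: "generates_annihilator A (unit_vec n j) g"
      using generates_annihilator_exists[of "unit_vec n j"] by auto
    then have "poly_mat f A *\<^sub>v unit_vec n j = 0\<^sub>v n"
      using max_degree_annihilator_dvd[OF v f max _ g] generates_annihilatorD[OF g] by simp
    then show ?thesis using mult_unit_vec_col[OF poly_mat_carrier[OF A] that] that by simp
  qed
  then have "poly_mat f A = 0\<^sub>m n n" using A by (intro mat_col_eqI) auto
  then have "n \<le> degree f" using deg f unfolding generates_annihilator_def by auto
  show ?thesis
  proof (intro bexI[OF _ v] allI impI)
    fix q assume "q \<noteq> 0" "poly_mat q A *\<^sub>v v = 0\<^sub>v n"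
    then have "degree f \<le> degree q" using generates_annihilatorD[OF f] by (simp add: dvd_imp_degree_le)
    then show "n \<le> degree q" using \<open>n \<le> degree f\<close> by simp
  qed
qed

end

definition krylov_mat :: "nat \<Rightarrow> 'a::semiring_1 mat \<Rightarrow> 'a vec \<Rightarrow> 'a mat" where
  "krylov_mat n A v = mat n n (\<lambda>(i, j). (A ^\<^sub>m j *\<^sub>v v) $ i)"

lemma krylov_mat_carrier [simp]: "krylov_mat n A v \<in> carrier_mat n n"
  and dim_krylov_mat [simp]: "dim_row (krylov_mat n A v) = n" "dim_col (krylov_mat n A v) = n"
  unfolding krylov_mat_def by simp_all

lemma col_krylov_mat:
  "A \<in> carrier_mat n n \<Longrightarrow> j < n \<Longrightarrow> col (krylov_mat n A v) j = A ^\<^sub>m j *\<^sub>v v"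
  unfolding krylov_mat_def by (intro eq_vecI) auto

lemma det_krylov_mat_nonzero:
  fixes A :: "'a::field mat"
  assumes A: "A \<in> carrier_mat n n" and v: "v \<in> carrier_vec n"
    and cyclic: "\<And>q. q \<noteq> 0 \<Longrightarrow> poly_mat q A *\<^sub>v v = 0\<^sub>v n \<Longrightarrow> n \<le> degree q"
  shows "det (krylov_mat n A v) \<noteq> 0"
proof
  let ?P = "krylov_mat n A v"
  assume "det ?P = 0"
  then obtain x where x: "x \<in> carrier_vec n" "x \<noteq> 0\<^sub>v n" "?P *\<^sub>v x = 0\<^sub>v n"
    using det_0_iff_vec_prod_zero_field[OF krylov_mat_carrier[of n A v]] by auto
  define q where "q = (\<Sum>j<n. Polynomial.monom (x $ j) j)"
  have coeff_q: "Polynomial.coeff q i = (if i < n then x $ i else 0)" for i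
    unfolding q_def by (simp add: Polynomial.coeff_sum Polynomial.coeff_monom)
  have "poly_mat q A *\<^sub>v v = ?P *\<^sub>v x"
  proof (rule eq_vecI)
    fix i assume "i < dim_vec (?P *\<^sub>v x)"
    then have i: "i < n" by simp
    have "(poly_mat q A *\<^sub>v v) $ i = (\<Sum>j<n. (poly_mat (Polynomial.monom (x $ j) j) A *\<^sub>v v) $ i)"
      unfolding q_def by (rule poly_mat_sum_mult_vec_index[OF A v _ i]) simp
    also have "\<dots> = (\<Sum>j<n. ?P $$ (i, j) * x $ j)"
      using A v i by (intro sum.cong) (auto simp: poly_mat_monom[OF A] krylov_mat_def mult.commute)
    also have "\<dots> = (?P *\<^sub>v x) $ i"
      using x(1) i by (auto simp: scalar_prod_def lessThan_atLeast0 intro: sum.cong)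
    finally show "(poly_mat q A *\<^sub>v v) $ i = (?P *\<^sub>v x) $ i" .
  qed (use A in auto)
  then have "poly_mat q A *\<^sub>v v = 0\<^sub>v n" using x by simp
  moreover obtain j where "j < n" "x $ j \<noteq> 0"
    using x(1,2) by (metis eq_vecI carrier_vecD index_zero_vec(1,2))
  then have "q \<noteq> 0" using coeff_q[of j] by auto
  moreover have "degree q < n"
    using \<open>j < n\<close> coeff_q by (intro degree_lessI) auto
  ultimately show False using cyclic by fastforce
qed

lemma cyclic_vector_similar_companion_shape:
  fixes A :: "'a::field mat"
  assumes A: "A \<in> carrier_mat n n" and v: "v \<in> carrier_vec n"
    and cyclic: "\<And>q. q \<noteq> 0 \<Longrightarrow> poly_mat q A *\<^sub>v v = 0\<^sub>v n \<Longrightarrow> n \<le> degree q"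
  shows "\<exists>C P Q. similar_mat_wit A C P Q \<and> (\<forall>j. Suc j < n \<longrightarrow> col C j = unit_vec n (Suc j))"
proof -
  define P where "P = krylov_mat n A v"
  have P: "P \<in> carrier_mat n n" unfolding P_def by simp
  obtain Q where Q: "Q \<in> carrier_mat n n" "P * Q = 1\<^sub>m n" "Q * P = 1\<^sub>m n"
    using det_non_zero_imp_unit[OF P det_krylov_mat_nonzero[OF A v cyclic, folded P_def], of "()"]
    unfolding Units_def by (auto simp: ring_mat_simps)
  define C where "C = Q * A * P"
  have "similar_mat_wit A C P Q"
  proof (rule similar_mat_witI[OF Q(2,3) _ A _ P Q(1)])
    show "A = P * C * Q"
      unfolding C_def using A P Q
      by (simp add: assoc_mult_mat[of _ n n _ n _ n] flip: assoc_mult_mat[of P n n Q n])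
    show "C \<in> carrier_mat n n" unfolding C_def using A P Q by auto
  qed
  moreover have "col C j = unit_vec n (Suc j)" if "Suc j < n" for j
  proof -
    have "col C j = (Q * A) *\<^sub>v col P j"
      unfolding C_def using A P Q that by (intro col_mult2) auto
    also have "\<dots> = Q *\<^sub>v (A *\<^sub>v (A ^\<^sub>m j *\<^sub>v v))"
      using that col_krylov_mat[OF A] assoc_mult_mat_vec[OF Q(1) A mult_mat_vec_carrier[OF pow_carrier_mat[OF A] v]]
      unfolding P_def by simp
    also have "A *\<^sub>v (A ^\<^sub>m j *\<^sub>v v) = col P (Suc j)"
      unfolding P_def col_krylov_mat[OF A that] pow_mat_Suc_left[OF A]
      using assoc_mult_mat_vec[OF A pow_carrier_mat[OF A] v] by simp
    also have "Q *\<^sub>v col P (Suc j) = col (Q * P) (Suc j)" by (rule col_mult2[symmetric]) (use P Q that in auto)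
    finally show ?thesis using Q(3) that by simp
  qed
  ultimately show ?thesis by blast
qed

section \<open>Square-zero plus 4-potent decompositions\<close>

definition square_zero_potent_decomposable :: "nat \<Rightarrow> 'a::semiring_1 mat \<Rightarrow> bool" where
  "square_zero_potent_decomposable n B \<longleftrightarrow> (\<exists>N D. N \<in> carrier_mat n n \<and> D \<in> carrier_mat n n \<and>
     B = N + D \<and> N ^\<^sub>m 2 = 0\<^sub>m n n \<and> D ^\<^sub>m 4 = D)"

lemma square_zero_potent_decomposableI:
  fixes C D :: "'a::ring_1 mat"
  assumes C: "C \<in> carrier_mat n n" and D: "D \<in> carrier_mat n n"
    and "(C - D) * (C - D) = 0\<^sub>m n n" and "D ^\<^sub>m 4 = D"
  shows "square_zero_potent_decomposable n C"
  unfolding square_zero_potent_decomposable_def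
proof (intro exI conjI)
  show "C = (C - D) + D" using C D by (intro eq_matI) auto
  show "(C - D) ^\<^sub>m 2 = 0\<^sub>m n n" using assms(3) C D by (simp add: numeral_2_eq_2)
qed (use assms in auto)

lemma square_zero_potent_decomposable_similar:
  assumes wit: "similar_mat_wit B C P Q" and B: "B \<in> carrier_mat n n"
    and "square_zero_potent_decomposable n C"
  shows "square_zero_potent_decomposable n B"
proof -
  obtain N D where N: "N \<in> carrier_mat n n" and D: "D \<in> carrier_mat n n" and "C = N + D"
    and N2: "N ^\<^sub>m 2 = 0\<^sub>m n n" and D4: "D ^\<^sub>m 4 = D"
    using assms(3) unfolding square_zero_potent_decomposable_def by blast
  note sim = similar_mat_witD2[OF B wit]
  have witN: "similar_mat_wit (P * N * Q) N P Q" and witD: "similar_mat_wit (P * D * Q) D P Q"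
    using sim N D by (auto intro!: similar_mat_witI[of P Q n])
  show ?thesis
    unfolding square_zero_potent_decomposable_def
  proof (intro exI conjI)
    show "B = P * N * Q + P * D * Q"
      using sim N D \<open>C = N + D\<close>
      by (simp add: mult_add_distrib_mat[of _ n n] add_mult_distrib_mat[of _ n n])
    show "(P * N * Q) ^\<^sub>m 2 = 0\<^sub>m n n"
      using similar_mat_wit_pow_id[OF witN] N2 sim by simp
    show "(P * D * Q) ^\<^sub>m 4 = P * D * Q"
      using similar_mat_wit_pow_id[OF witD] D4 by simp
  qed (use sim N D in auto)
qed

lemma square_zero_diff_if_agree:
  fixes C D :: "'a::ring mat"
  assumes C: "C \<in> carrier_mat n n" and D: "D \<in> carrier_mat n n"
    and agree: "\<And>i j. i < n \<Longrightarrow> j < n \<Longrightarrow> C $$ (i, j) \<noteq> D $$ (i, j) \<Longrightarrow> i \<notin> J \<and> j \<in> J"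
  shows "(C - D) * (C - D) = 0\<^sub>m n n"
proof (rule eq_matI)
  fix i j assume "i < dim_row (0\<^sub>m n n)" "j < dim_col (0\<^sub>m n n)"
  then have ij: "i < n" "j < n" by auto
  have "(C - D) $$ (i, l) * (C - D) $$ (l, j) = 0" if "l < n" for l
  proof (cases "C $$ (i, l) = D $$ (i, l)")
    case False
    then have "C $$ (l, j) = D $$ (l, j)" using agree[OF ij(1) that] agree[OF that ij(2)] by blast
    then show ?thesis using C D ij that by simp
  qed (use C D ij that in simp)
  then show "((C - D) * (C - D)) $$ (i, j) = 0\<^sub>m n n $$ (i, j)"
    using C D ij by (simp add: scalar_prod_def)
qed (use C D in auto)

lemma square_zero_diff_companion_shape:
  fixes C D :: "'a::ring_1 mat"
  assumes C: "C \<in> carrier_mat n n" and D: "D \<in> carrier_mat n n"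
    and shape: "\<And>j. Suc j < n \<Longrightarrow> col C j = unit_vec n (Suc j)"
    and "n - 1 \<in> J"
    and last: "\<And>i. i < n \<Longrightarrow> i \<in> J \<Longrightarrow> D $$ (i, n - 1) = C $$ (i, n - 1)"
    and outside: "\<And>j. Suc j < n \<Longrightarrow> j \<notin> J \<Longrightarrow> col D j = unit_vec n (Suc j)"
    and inside: "\<And>i j. i < n \<Longrightarrow> Suc j < n \<Longrightarrow> i \<in> J \<Longrightarrow> j \<in> J \<Longrightarrow> D $$ (i, j) = C $$ (i, j)"
  shows "(C - D) * (C - D) = 0\<^sub>m n n"
proof (rule square_zero_diff_if_agree[OF C D])
  fix i j assume i: "i < n" and j: "j < n" and ne: "C $$ (i, j) \<noteq> D $$ (i, j)"
  show "i \<notin> J \<and> j \<in> J"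
  proof (cases "Suc j < n")
    case True
    have "j \<in> J"
    proof (rule ccontr)
      assume "j \<notin> J"
      then have "col D j $ i = col C j $ i" using outside shape True by simp
      with ne show False using C D i j by simp
    qed
    then show ?thesis using inside[OF i True] ne by auto
  next
    case False
    then have "j = n - 1" using j by simp
    then show ?thesis using last[OF i] ne \<open>n - 1 \<in> J\<close> by auto
  qed
qed

lemma pow4_eq_self_if_cube_fixes_image:
  fixes D :: "'a::semiring_1 mat"
  assumes D: "D \<in> carrier_mat n n"
    and cube: "\<And>j. j < n \<Longrightarrow> D *\<^sub>v (D *\<^sub>v (D *\<^sub>v (D *\<^sub>v unit_vec n j))) = D *\<^sub>v unit_vec n j"
  shows "D ^\<^sub>m 4 = D"
proof -
  have pow4: "D ^\<^sub>m 4 *\<^sub>v x = D *\<^sub>v (D *\<^sub>v (D *\<^sub>v (D *\<^sub>v x)))" if x: "x \<in> carrier_vec n" for x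
  proof -
    have D2: "D * D \<in> carrier_mat n n" and D3: "D * D * D \<in> carrier_mat n n" using D by auto
    have "D ^\<^sub>m 4 = D * D * D * D" using D by (simp add: numeral_eq_Suc)
    also have "\<dots> *\<^sub>v x = (D * D * D) *\<^sub>v (D *\<^sub>v x)" using D3 D x by (rule assoc_mult_mat_vec)
    also have "\<dots> = (D * D) *\<^sub>v (D *\<^sub>v (D *\<^sub>v x))"
      by (rule assoc_mult_mat_vec[OF D2 D]) (use D x in simp)
    also have "\<dots> = D *\<^sub>v (D *\<^sub>v (D *\<^sub>v (D *\<^sub>v x)))"
      by (rule assoc_mult_mat_vec[OF D D]) (use D x in simp)
    finally show ?thesis .
  qed
  have "col (D ^\<^sub>m 4) j = col D j" if "j < n" for j
  proof -
    have "col (D ^\<^sub>m 4) j = D ^\<^sub>m 4 *\<^sub>v unit_vec n j"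
      using mult_unit_vec_col[OF pow_carrier_mat[OF D] that] by simp
    also have "\<dots> = D *\<^sub>v unit_vec n j" using pow4[OF unit_vec_carrier] cube[OF that] by simp
    finally show ?thesis using mult_unit_vec_col[OF D that] by simp
  qed
  then show ?thesis using D by (intro mat_col_eqI) auto
qed

section \<open>The two constructions over \<open>F\<^sub>2\<close>\<close>

lemma F2_cases: "(x::F2) = 0 \<or> x = 1"
proof -
  obtain i where "i < CARD(bool)" "x = of_nat i" using surj_of_nat_mod_ring[of x] by auto
  then show ?thesis by (cases i; auto simp: less_Suc_eq)
qed

lemma F2_add_self [simp]: "(x::F2) + x = 0"
proof -
  have "(1::F2) + 1 = of_nat CARD(bool)" by simp
  also have "\<dots> = 0" by (rule of_nat_card_eq_0)
  finally show ?thesis using F2_cases[of x] by auto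
qed

lemma F2_add_self_left [simp]: "(x::F2) + (x + y) = y"
  by (simp flip: add.assoc)

lemma F2_vec_add_self [simp]: "(v :: F2 vec) \<in> carrier_vec n \<Longrightarrow> v + v = 0\<^sub>v n"
  by (intro eq_vecI) auto

(*
  Trace 0: e_0 goes to 0, each block e_(4q+1) -> e_(4q+2) -> e_(4q+3) -> e_(4q+4) -> e_(4q+2) is a
  3-cycle with a tail, and e_(n-3) -> e_(n-2) -> e_(n-1) -> L -> e_(n-2). J consists of the multiples
  of 4 and n - 1. Column j of null_corr0 is e_(j-3) + e_j for the nonzero multiples j of 4 and e_0
  for j = 0; D kills these columns, so L = e_(n-3) + null_corr0 a still satisfies D L = e_(n-2).
*)
context
  fixes n m :: nat and a :: "F2 vec"
  assumes n: "n = 4 * m + 8" and a: "a \<in> carrier_vec n"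
begin

definition null_corr0 :: "F2 mat" where
  "null_corr0 = mat n n (\<lambda>(i, j). if j mod 4 = 0 \<and> (i = j \<or> i + 3 = j) then 1 else 0)"

definition last_col0 :: "F2 vec" where
  "last_col0 = unit_vec n (n - 3) + null_corr0 *\<^sub>v a"

definition potent_col0 :: "nat \<Rightarrow> F2 vec" where
  "potent_col0 j = (if j = n - 1 then last_col0 else if j = 0 then 0\<^sub>v n
     else if j mod 4 = 0 then unit_vec n (j - 2) else unit_vec n (Suc j))"

definition potent0 :: "F2 mat" where
  "potent0 = mat_of_cols n (map potent_col0 [0..<n])"

lemma indices0_cases:
  assumes "j < n"
  obtains "j = 0" | q where "q \<le> m" "j = 4 * q + 1" | q where "q \<le> m" "j = 4 * q + 2"
    | q where "q \<le> m" "j = 4 * q + 3" | q where "q \<le> m" "j = 4 * q + 4"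
    | "j = n - 3" | "j = n - 2" | "j = n - 1"
proof -
  have "j = 0 \<or> (\<exists>q\<le>m. j = 4 * q + 1 \<or> j = 4 * q + 2 \<or> j = 4 * q + 3 \<or> j = 4 * q + 4)
      \<or> j = 4 * m + 5 \<or> j = 4 * m + 6 \<or> j = 4 * m + 7"
    using assms n by presburger
  moreover have "4 * m + 5 = n - 3" "4 * m + 6 = n - 2" "4 * m + 7 = n - 1" using n by simp_all
  ultimately show ?thesis using that by metis
qed

lemma last_indices0: "8 \<le> n" "(n - 3) mod 4 = 1" "(n - 2) mod 4 = 2" "(n - 1) mod 4 = 3"
    "Suc (n - 3) = n - 2" "Suc (n - 2) = n - 1" "q \<le> m \<Longrightarrow> 4 * q + 8 \<le> n"
  using n by (simp_all add: mod_Suc)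

lemma null_corr0_carrier [simp]: "null_corr0 \<in> carrier_mat n n"
  unfolding null_corr0_def by simp

lemma last_col0_carrier [simp]: "last_col0 \<in> carrier_vec n"
  unfolding last_col0_def using a by (intro add_carrier_vec mult_mat_vec_carrier[OF null_corr0_carrier]) auto

lemma potent_col0_carrier [simp]: "potent_col0 j \<in> carrier_vec n"
  unfolding potent_col0_def by simp

lemma potent0_carrier [simp]: "potent0 \<in> carrier_mat n n"
  unfolding potent0_def by simp

lemma dim_potent0 [simp]: "dim_row potent0 = n" "dim_col potent0 = n"
  using carrier_matD[OF potent0_carrier] by auto

lemma dim_null_corr0 [simp]: "dim_row null_corr0 = n" "dim_col null_corr0 = n"
  using carrier_matD[OF null_corr0_carrier] by auto

lemma potent0_mult_vec_carrier [simp]: "potent0 *\<^sub>v v \<in> carrier_vec n"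
  by (rule carrier_vecI) simp

lemma null_corr0_mult_vec_carrier [simp]: "null_corr0 *\<^sub>v v \<in> carrier_vec n"
  by (rule carrier_vecI) simp

lemma potent0_mult_unit_vec: "j < n \<Longrightarrow> potent0 *\<^sub>v unit_vec n j = potent_col0 j"
  unfolding potent0_def by (rule mat_of_cols_map_mult_unit_vec) simp_all

lemma potent0_block:
  assumes "q \<le> m"
  shows "potent0 *\<^sub>v unit_vec n (4 * q + 1) = unit_vec n (4 * q + 2)"
    and "potent0 *\<^sub>v unit_vec n (4 * q + 2) = unit_vec n (4 * q + 3)"
    and "potent0 *\<^sub>v unit_vec n (4 * q + 3) = unit_vec n (4 * q + 4)"
    and "potent0 *\<^sub>v unit_vec n (4 * q + 4) = unit_vec n (4 * q + 2)"
  using last_indices0(7)[OF assms] by (auto simp: potent0_mult_unit_vec potent_col0_def mod_Suc)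

lemma potent0_top:
  "potent0 *\<^sub>v unit_vec n 0 = 0\<^sub>v n"
  "potent0 *\<^sub>v unit_vec n (n - 3) = unit_vec n (n - 2)"
  "potent0 *\<^sub>v unit_vec n (n - 2) = unit_vec n (n - 1)"
  "potent0 *\<^sub>v unit_vec n (n - 1) = last_col0"
  using last_indices0(1-6) by (auto simp: potent0_mult_unit_vec potent_col0_def)

lemma potent0_mult_col_null_corr0: "j < n \<Longrightarrow> potent0 *\<^sub>v col null_corr0 j = 0\<^sub>v n"
proof (cases "j mod 4 = 0")
  case False
  then have "col null_corr0 j = 0\<^sub>v n" if "j < n" using that by (intro eq_vecI) (auto simp: null_corr0_def)
  then show "j < n \<Longrightarrow> ?thesis" by (simp add: mult_zero_vec_mat[OF potent0_carrier])
next
  case True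
  assume j: "j < n"
  then show ?thesis
  proof (cases rule: indices0_cases)
    case 1
    then have "col null_corr0 j = unit_vec n 0"
      using j by (intro eq_vecI) (auto simp: null_corr0_def)
    then show ?thesis using 1 potent0_top(1) by simp
  next
    case (5 q)
    then have col: "col null_corr0 j = unit_vec n (4 * q + 1) + unit_vec n (4 * q + 4)"
      using j by (intro eq_vecI) (auto simp: null_corr0_def mod_Suc)
    show ?thesis
      unfolding col mult_add_distrib_mat_vec[OF potent0_carrier unit_vec_carrier unit_vec_carrier]
        potent0_block[OF \<open>q \<le> m\<close>] by simp
  qed (use True last_indices0 in \<open>simp_all add: mod_Suc\<close>)
qed

lemma potent0_mult_last_col0: "potent0 *\<^sub>v last_col0 = unit_vec n (n - 2)"
proof -
  have "potent0 * null_corr0 = 0\<^sub>m n n"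
    by (rule mat_col_eqI) (simp_all add: col_mult2[OF potent0_carrier null_corr0_carrier]
        potent0_mult_col_null_corr0 carrier_matD[OF potent0_carrier] carrier_matD[OF null_corr0_carrier])
  then have "potent0 *\<^sub>v (null_corr0 *\<^sub>v a) = 0\<^sub>v n"
    using assoc_mult_mat_vec[OF potent0_carrier null_corr0_carrier a] zero_mat_mult_vec[OF a] by simp
  then show ?thesis
    unfolding last_col0_def potent0_top(2)[symmetric] using a
    by (subst mult_add_distrib_mat_vec[OF potent0_carrier]) auto
qed

lemma last_col0_index:
  assumes i: "i < n" and J: "i mod 4 = 0 \<or> i = n - 1"
  shows "last_col0 $ i = (if i = n - 1 then 0 else a $ i)"
proof -
  have "null_corr0 $$ (i, j) = (if j = i \<and> i \<noteq> n - 1 then 1 else 0)" if "j < n" for j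
  proof (cases "i = n - 1")
    case True
    then show ?thesis using i that last_indices0(4) by (auto simp: null_corr0_def)
  next
    case False
    then have "i mod 4 = 0" using J by simp
    then have "(i + 3) mod 4 \<noteq> 0" by presburger
    then show ?thesis using i that J False by (auto simp: null_corr0_def)
  qed
  then have "(null_corr0 *\<^sub>v a) $ i = (if i = n - 1 then 0 else a $ i)"
    using i a by (auto simp: null_corr0_def scalar_prod_def if_distrib[of "\<lambda>x. x * _"] cong: if_cong)
  moreover have "i \<noteq> n - 3" using J last_indices0(2,4) by auto
  moreover have "last_col0 $ i = unit_vec n (n - 3) $ i + (null_corr0 *\<^sub>v a) $ i"
    unfolding last_col0_def using i by (simp add: carrier_vecD[OF null_corr0_mult_vec_carrier])
  ultimately show ?thesis using i by (simp add: index_unit_vec_unbounded)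
qed

lemma potent0_pow4: "potent0 ^\<^sub>m 4 = potent0"
proof (rule pow4_eq_self_if_cube_fixes_image[OF potent0_carrier])
  fix j assume "j < n"
  then show "potent0 *\<^sub>v (potent0 *\<^sub>v (potent0 *\<^sub>v (potent0 *\<^sub>v unit_vec n j))) = potent0 *\<^sub>v unit_vec n j"
    by (cases rule: indices0_cases)
      (simp_all only: potent0_block potent0_top potent0_mult_last_col0 mult_zero_vec_mat[OF potent0_carrier])
qed

lemma square_zero_diff_potent0:
  assumes C: "C \<in> carrier_mat n n" and shape: "\<And>j. Suc j < n \<Longrightarrow> col C j = unit_vec n (Suc j)"
    and last: "col C (n - 1) = a" and tr: "a $ (n - 1) = 0"
  shows "(C - potent0) * (C - potent0) = 0\<^sub>m n n"
proof (rule square_zero_diff_companion_shape[OF C potent0_carrier shape,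
      where J = "{k. k mod 4 = 0 \<or> k = n - 1}"])
  have D_ij: "potent0 $$ (i, j) = potent_col0 j $ i" if "i < n" "j < n" for i j
    unfolding potent0_def using that by (rule mat_of_cols_map_index)
  show "n - 1 \<in> {k. k mod 4 = 0 \<or> k = n - 1}" by blast
  show "potent0 $$ (i, n - 1) = C $$ (i, n - 1)" if "i < n" "i \<in> {k. k mod 4 = 0 \<or> k = n - 1}" for i
    using that D_ij[OF that(1)] last_col0_index[OF that(1)] tr last C by (auto simp: potent_col0_def)
  show "col potent0 j = unit_vec n (Suc j)" if "Suc j < n" "j \<notin> {k. k mod 4 = 0 \<or> k = n - 1}" for j
    using that unfolding potent0_def by (subst col_mat_of_cols_map) (auto simp: potent_col0_def)
  show "potent0 $$ (i, j) = C $$ (i, j)"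
    if i: "i < n" "i \<in> {k. k mod 4 = 0 \<or> k = n - 1}" and j: "Suc j < n" "j \<in> {k. k mod 4 = 0 \<or> k = n - 1}" for i j
  proof -
    have "j mod 4 = 0" using j by auto
    then have "Suc j mod 4 = 1" by (simp add: mod_Suc)
    then have "i \<noteq> Suc j" using i(2) last_indices0(4) by auto
    moreover have "i \<noteq> j - 2" if "j \<noteq> 0"
    proof
      assume "i = j - 2"
      moreover have "2 \<le> j" using \<open>j mod 4 = 0\<close> that by presburger
      ultimately have "i + 2 = j" by simp
      then have "i mod 4 = 2" using \<open>j mod 4 = 0\<close> by presburger
      then show False using i(2) last_indices0(4) by auto
    qed
    moreover have "C $$ (i, j) = col C j $ i" using C i(1) j(1) by simp
    ultimately show ?thesis
      using i j D_ij[of i j] shape[OF j(1)] \<open>j mod 4 = 0\<close>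
      by (auto simp: potent_col0_def index_unit_vec_unbounded)
  qed
qed

end

(*
  Trace 1: 3-cycles e_0 -> e_1 -> e_2 -> e_0 and e_3 -> e_4 -> e_5 -> e_3, blocks
  e_(4q+6) -> e_(4q+7) -> e_(4q+8) -> e_(4q+9) -> e_(4q+7), and e_(n-2) -> e_(n-1) -> L -> X -> e_(n-1)
  with X = tail_vec1 and L = last_col1. J = {2} + {j = 1 mod 4, j >= 5} + {n - 1}. The columns of
  fixed_corr1 are the sums over the two 3-cycles, fixed by D; the columns of null_corr1 are
  e_(j-3) + e_j, killed by D.
*)
context
  fixes n m :: nat and a :: "F2 vec"
  assumes n: "n = 4 * m + 8" and a: "a \<in> carrier_vec n"
begin

definition fixed_corr1 :: "F2 mat" where
  "fixed_corr1 = mat n n (\<lambda>(i, j). if (j = 2 \<and> i \<le> 2) \<or> (j = 5 \<and> 3 \<le> i \<and> i \<le> 5) then 1 else 0)"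

definition null_corr1 :: "F2 mat" where
  "null_corr1 = mat n n (\<lambda>(i, j). if j mod 4 = 1 \<and> 9 \<le> j \<and> (i = j \<or> i + 3 = j) then 1 else 0)"

definition tail_vec1 :: "F2 vec" where
  "tail_vec1 = unit_vec n (n - 2) + null_corr1 *\<^sub>v a"

definition last_col1 :: "F2 vec" where
  "last_col1 = unit_vec n (n - 1) + fixed_corr1 *\<^sub>v a + tail_vec1"

definition potent_col1 :: "nat \<Rightarrow> F2 vec" where
  "potent_col1 j = (if j = n - 1 then last_col1
     else if j = 2 \<or> (j mod 4 = 1 \<and> 5 \<le> j) then unit_vec n (j - 2) else unit_vec n (Suc j))"

definition potent1 :: "F2 mat" where
  "potent1 = mat_of_cols n (map potent_col1 [0..<n])"

lemma last_indices1: "8 \<le> n" "(n - 2) mod 4 = 2" "(n - 1) mod 4 = 3" "Suc (n - 2) = n - 1"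
    "q < m \<Longrightarrow> 4 * q + 12 \<le> n"
  using n by (simp_all add: mod_Suc)

lemma indices1_cases:
  assumes "j < n"
  obtains "j = 0" | "j = 1" | "j = 2" | "j = 3" | "j = 4" | "j = 5"
    | q where "q < m" "j = 4 * q + 6" | q where "q < m" "j = 4 * q + 7"
    | q where "q < m" "j = 4 * q + 8" | q where "q < m" "j = 4 * q + 9"
    | "j = n - 2" | "j = n - 1"
proof -
  have "j < 6 \<or> (\<exists>q<m. j = 4 * q + 6 \<or> j = 4 * q + 7 \<or> j = 4 * q + 8 \<or> j = 4 * q + 9)
      \<or> j = 4 * m + 6 \<or> j = 4 * m + 7"
    using assms n by presburger
  moreover have "4 * m + 6 = n - 2" "4 * m + 7 = n - 1" using n by simp_all
  moreover have "j < 6 \<Longrightarrow> j = 0 \<or> j = 1 \<or> j = 2 \<or> j = 3 \<or> j = 4 \<or> j = 5" by auto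
  ultimately show ?thesis using that by metis
qed

lemma fixed_corr1_carrier [simp]: "fixed_corr1 \<in> carrier_mat n n"
  unfolding fixed_corr1_def by simp

lemma null_corr1_carrier [simp]: "null_corr1 \<in> carrier_mat n n"
  unfolding null_corr1_def by simp

lemma tail_vec1_carrier [simp]: "tail_vec1 \<in> carrier_vec n"
  unfolding tail_vec1_def using a by (intro add_carrier_vec mult_mat_vec_carrier[OF null_corr1_carrier]) auto

lemma last_col1_carrier [simp]: "last_col1 \<in> carrier_vec n"
  unfolding last_col1_def using a
  by (intro add_carrier_vec mult_mat_vec_carrier[OF fixed_corr1_carrier] tail_vec1_carrier) auto

lemma potent_col1_carrier [simp]: "potent_col1 j \<in> carrier_vec n"
  unfolding potent_col1_def by simp

lemma potent1_carrier [simp]: "potent1 \<in> carrier_mat n n"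
  unfolding potent1_def by simp

lemma dim_potent1 [simp]: "dim_row potent1 = n" "dim_col potent1 = n"
  using carrier_matD[OF potent1_carrier] by auto

lemma dim_corr1 [simp]: "dim_row fixed_corr1 = n" "dim_col fixed_corr1 = n"
    "dim_row null_corr1 = n" "dim_col null_corr1 = n"
  using carrier_matD[OF fixed_corr1_carrier] carrier_matD[OF null_corr1_carrier] by auto

lemma potent1_corr1_mult_vec_carrier [simp]:
  "potent1 *\<^sub>v v \<in> carrier_vec n" "fixed_corr1 *\<^sub>v v \<in> carrier_vec n" "null_corr1 *\<^sub>v v \<in> carrier_vec n"
  by (rule carrier_vecI, simp)+

lemma potent1_mult_unit_vec: "j < n \<Longrightarrow> potent1 *\<^sub>v unit_vec n j = potent_col1 j"
  unfolding potent1_def by (rule mat_of_cols_map_mult_unit_vec) simp_all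

lemma potent1_start:
  "potent1 *\<^sub>v unit_vec n 0 = unit_vec n 1" "potent1 *\<^sub>v unit_vec n 1 = unit_vec n 2"
  "potent1 *\<^sub>v unit_vec n 2 = unit_vec n 0" "potent1 *\<^sub>v unit_vec n 3 = unit_vec n 4"
  "potent1 *\<^sub>v unit_vec n 4 = unit_vec n 5" "potent1 *\<^sub>v unit_vec n 5 = unit_vec n 3"
  using last_indices1(1) by (auto simp: potent1_mult_unit_vec potent_col1_def)

lemma potent1_block:
  assumes "q < m"
  shows "potent1 *\<^sub>v unit_vec n (4 * q + 6) = unit_vec n (4 * q + 7)"
    and "potent1 *\<^sub>v unit_vec n (4 * q + 7) = unit_vec n (4 * q + 8)"
    and "potent1 *\<^sub>v unit_vec n (4 * q + 8) = unit_vec n (4 * q + 9)"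
    and "potent1 *\<^sub>v unit_vec n (4 * q + 9) = unit_vec n (4 * q + 7)"
  using last_indices1(5)[OF assms] by (auto simp: potent1_mult_unit_vec potent_col1_def mod_Suc)

lemma potent1_top:
  "potent1 *\<^sub>v unit_vec n (n - 2) = unit_vec n (n - 1)"
  "potent1 *\<^sub>v unit_vec n (n - 1) = last_col1"
  using last_indices1(1-4) by (auto simp: potent1_mult_unit_vec potent_col1_def)

lemma potent1_mult_col_fixed_corr1: "j < n \<Longrightarrow> potent1 *\<^sub>v col fixed_corr1 j = col fixed_corr1 j"
proof -
  assume j: "j < n"
  consider "j = 2" | "j = 5" | "j \<noteq> 2" "j \<noteq> 5" by blast
  then show ?thesis
  proof cases
    case 1
    then have col: "col fixed_corr1 j = unit_vec n 0 + (unit_vec n 1 + unit_vec n 2)"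
      using j by (intro eq_vecI) (auto simp: fixed_corr1_def index_unit_vec_unbounded)
    show ?thesis
      unfolding col mult_add_distrib_mat_vec[OF potent1_carrier unit_vec_carrier add_carrier_vec[OF unit_vec_carrier unit_vec_carrier]]
        mult_add_distrib_mat_vec[OF potent1_carrier unit_vec_carrier unit_vec_carrier] potent1_start
      using last_indices1(1) by (intro eq_vecI) (auto simp: index_unit_vec_unbounded)
  next
    case 2
    then have col: "col fixed_corr1 j = unit_vec n 3 + (unit_vec n 4 + unit_vec n 5)"
      using j by (intro eq_vecI) (auto simp: fixed_corr1_def index_unit_vec_unbounded)
    show ?thesis
      unfolding col mult_add_distrib_mat_vec[OF potent1_carrier unit_vec_carrier add_carrier_vec[OF unit_vec_carrier unit_vec_carrier]]
        mult_add_distrib_mat_vec[OF potent1_carrier unit_vec_carrier unit_vec_carrier] potent1_start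
      using last_indices1(1) by (intro eq_vecI) (auto simp: index_unit_vec_unbounded)
  next
    case 3
    then have "col fixed_corr1 j = 0\<^sub>v n" using j by (intro eq_vecI) (auto simp: fixed_corr1_def)
    then show ?thesis by (simp add: mult_zero_vec_mat[OF potent1_carrier])
  qed
qed

lemma potent1_mult_col_null_corr1: "j < n \<Longrightarrow> potent1 *\<^sub>v col null_corr1 j = 0\<^sub>v n"
proof (cases "j mod 4 = 1 \<and> 9 \<le> j")
  case False
  then have "col null_corr1 j = 0\<^sub>v n" if "j < n" using that by (intro eq_vecI) (auto simp: null_corr1_def)
  then show "j < n \<Longrightarrow> ?thesis" by (simp add: mult_zero_vec_mat[OF potent1_carrier])
next
  case True
  assume j: "j < n"
  then show ?thesis
  proof (cases rule: indices1_cases)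
    case (10 q)
    then have col: "col null_corr1 j = unit_vec n (4 * q + 6) + unit_vec n (4 * q + 9)"
      using j by (intro eq_vecI) (auto simp: null_corr1_def mod_Suc)
    show ?thesis
      unfolding col mult_add_distrib_mat_vec[OF potent1_carrier unit_vec_carrier unit_vec_carrier]
        potent1_block[OF \<open>q < m\<close>] by simp
  qed (use True last_indices1 in \<open>simp_all add: mod_Suc\<close>)
qed

lemma potent1_mult_tail_vec1: "potent1 *\<^sub>v tail_vec1 = unit_vec n (n - 1)"
proof -
  have "potent1 * null_corr1 = 0\<^sub>m n n"
    by (rule mat_col_eqI) (simp_all add: col_mult2[OF potent1_carrier null_corr1_carrier]
        potent1_mult_col_null_corr1)
  then have "potent1 *\<^sub>v (null_corr1 *\<^sub>v a) = 0\<^sub>v n"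
    using assoc_mult_mat_vec[OF potent1_carrier null_corr1_carrier a] zero_mat_mult_vec[OF a] by simp
  then show ?thesis
    unfolding tail_vec1_def potent1_top(1)[symmetric] using a
    by (subst mult_add_distrib_mat_vec[OF potent1_carrier]) auto
qed

lemma potent1_mult_last_col1: "potent1 *\<^sub>v last_col1 = tail_vec1"
proof -
  have "potent1 * fixed_corr1 = fixed_corr1"
    by (rule mat_col_eqI) (simp_all add: col_mult2[OF potent1_carrier fixed_corr1_carrier]
        potent1_mult_col_fixed_corr1)
  then have fixed: "potent1 *\<^sub>v (fixed_corr1 *\<^sub>v a) = fixed_corr1 *\<^sub>v a"
    using assoc_mult_mat_vec[OF potent1_carrier fixed_corr1_carrier a] by simp
  have "potent1 *\<^sub>v last_col1 =
      potent1 *\<^sub>v unit_vec n (n - 1) + potent1 *\<^sub>v (fixed_corr1 *\<^sub>v a) + potent1 *\<^sub>v tail_vec1"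
    unfolding last_col1_def by (simp add: mult_add_distrib_mat_vec[OF potent1_carrier])
  also have "\<dots> = last_col1 + fixed_corr1 *\<^sub>v a + unit_vec n (n - 1)"
    unfolding potent1_top(2) fixed potent1_mult_tail_vec1 ..
  also have "\<dots> = tail_vec1"
    unfolding last_col1_def
    by (intro eq_vecI) (simp_all add: add_ac carrier_vecD[OF tail_vec1_carrier])
  finally show ?thesis .
qed

lemma last_col1_index:
  assumes i: "i < n" and J: "i = 2 \<or> (i mod 4 = 1 \<and> 5 \<le> i) \<or> i = n - 1"
  shows "last_col1 $ i = (if i = n - 1 then 1 else a $ i)"
proof -
  have "fixed_corr1 $$ (i, j) = (if j = i \<and> (i = 2 \<or> i = 5) then 1 else 0)" if "j < n" for j
    using i J that last_indices1(1) by (auto simp: fixed_corr1_def)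
  then have fixed: "(fixed_corr1 *\<^sub>v a) $ i = (if i = 2 \<or> i = 5 then a $ i else 0)"
    using i a by (auto simp: scalar_prod_def if_distrib[of "\<lambda>x. x * _"] cong: if_cong)
  have "i mod 4 = 1 \<Longrightarrow> (i + 3) mod 4 = 0" by presburger
  then have "null_corr1 $$ (i, j) = (if j = i \<and> i mod 4 = 1 \<and> 9 \<le> i then 1 else 0)" if "j < n" for j
    using i J that last_indices1(3) by (auto simp: null_corr1_def)
  then have null: "(null_corr1 *\<^sub>v a) $ i = (if i mod 4 = 1 \<and> 9 \<le> i then a $ i else 0)"
    using i a by (auto simp: scalar_prod_def if_distrib[of "\<lambda>x. x * _"] cong: if_cong)
  have "last_col1 $ i = unit_vec n (n - 1) $ i + (fixed_corr1 *\<^sub>v a) $ i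
      + (unit_vec n (n - 2) $ i + (null_corr1 *\<^sub>v a) $ i)"
    unfolding last_col1_def tail_vec1_def using i by simp
  moreover have "i \<noteq> n - 2" using J last_indices1(1-3) by auto
  moreover have "i mod 4 = 1 \<Longrightarrow> 5 \<le> i \<Longrightarrow> i = 5 \<or> 9 \<le> i" by presburger
  ultimately show ?thesis
    unfolding fixed null using i J last_indices1(1,3) by (auto simp: index_unit_vec_unbounded)
qed

lemma potent1_pow4: "potent1 ^\<^sub>m 4 = potent1"
proof (rule pow4_eq_self_if_cube_fixes_image[OF potent1_carrier])
  fix j assume "j < n"
  then show "potent1 *\<^sub>v (potent1 *\<^sub>v (potent1 *\<^sub>v (potent1 *\<^sub>v unit_vec n j))) = potent1 *\<^sub>v unit_vec n j"
    by (cases rule: indices1_cases)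
      (simp_all only: potent1_start potent1_block potent1_top potent1_mult_last_col1 potent1_mult_tail_vec1)
qed

lemma square_zero_diff_potent1:
  assumes C: "C \<in> carrier_mat n n" and shape: "\<And>j. Suc j < n \<Longrightarrow> col C j = unit_vec n (Suc j)"
    and last: "col C (n - 1) = a" and tr: "a $ (n - 1) = 1"
  shows "(C - potent1) * (C - potent1) = 0\<^sub>m n n"
proof (rule square_zero_diff_companion_shape[OF C potent1_carrier shape,
      where J = "{k. k = 2 \<or> (k mod 4 = 1 \<and> 5 \<le> k) \<or> k = n - 1}"])
  have D_ij: "potent1 $$ (i, j) = potent_col1 j $ i" if "i < n" "j < n" for i j
    unfolding potent1_def using that by (rule mat_of_cols_map_index)
  show "n - 1 \<in> {k. k = 2 \<or> (k mod 4 = 1 \<and> 5 \<le> k) \<or> k = n - 1}" by blast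
  show "potent1 $$ (i, n - 1) = C $$ (i, n - 1)"
    if "i < n" "i \<in> {k. k = 2 \<or> (k mod 4 = 1 \<and> 5 \<le> k) \<or> k = n - 1}" for i
    using that D_ij[OF that(1)] last_col1_index[OF that(1)] tr last C by (auto simp: potent_col1_def)
  show "col potent1 j = unit_vec n (Suc j)"
    if "Suc j < n" "j \<notin> {k. k = 2 \<or> (k mod 4 = 1 \<and> 5 \<le> k) \<or> k = n - 1}" for j
    using that unfolding potent1_def by (subst col_mat_of_cols_map) (auto simp: potent_col1_def)
  show "potent1 $$ (i, j) = C $$ (i, j)"
    if i: "i < n" "i \<in> {k. k = 2 \<or> (k mod 4 = 1 \<and> 5 \<le> k) \<or> k = n - 1}"
      and j: "Suc j < n" "j \<in> {k. k = 2 \<or> (k mod 4 = 1 \<and> 5 \<le> k) \<or> k = n - 1}" for i j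
  proof -
    have jJ: "j = 2 \<or> (j mod 4 = 1 \<and> 5 \<le> j)" using j by auto
    then have "Suc j = 3 \<or> (Suc j mod 4 = 2 \<and> 6 \<le> Suc j)" by (auto simp: mod_Suc)
    then have "i \<noteq> Suc j" using i(2) last_indices1(1,3) by auto
    moreover have "i \<noteq> j - 2"
    proof
      assume "i = j - 2"
      then have "i + 2 = j" using jJ by auto
      then have "i = 0 \<or> (i mod 4 = 3 \<and> i + 2 < n - 1)" using jJ j(1) by presburger
      then show False using i(2) last_indices1(3) by auto
    qed
    moreover have "C $$ (i, j) = col C j $ i" using C i(1) j(1) by simp
    ultimately show ?thesis
      using i j D_ij[of i j] shape[OF j(1)] jJ by (auto simp: potent_col1_def index_unit_vec_unbounded)
  qed
qed

end

lemma companion_shape_decomposable: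
  fixes C :: "F2 mat"
  assumes n: "n = 4 * m + 8" and C: "C \<in> carrier_mat n n"
    and shape: "\<And>j. Suc j < n \<Longrightarrow> col C j = unit_vec n (Suc j)"
  shows "square_zero_potent_decomposable n C"
proof -
  have a: "col C (n - 1) \<in> carrier_vec n" by (rule carrier_vecI) (use C in auto)
  consider "col C (n - 1) $ (n - 1) = 0" | "col C (n - 1) $ (n - 1) = 1" using F2_cases by blast
  then show ?thesis
  proof cases
    case 1
    show ?thesis
      by (rule square_zero_potent_decomposableI[OF C potent0_carrier[OF n a]
            square_zero_diff_potent0[OF n a C shape refl 1] potent0_pow4[OF n a]])
  next
    case 2
    show ?thesis
      by (rule square_zero_potent_decomposableI[OF C potent1_carrier[OF n a]
            square_zero_diff_potent1[OF n a C shape refl 2] potent1_pow4[OF n a]])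
  qed
qed

theorem corollary2p8:
  fixes k :: nat and B :: "F2 mat"
  assumes "k \<ge> 2"
    and "B \<in> carrier_mat (4 * k) (4 * k)"
    and "non_derogatory B"
  shows "\<exists>N D. N \<in> carrier_mat (4 * k) (4 * k) \<and> D \<in> carrier_mat (4 * k) (4 * k) \<and>
           B = N + D \<and> N ^\<^sub>m 2 = 0\<^sub>m (4 * k) (4 * k) \<and> D ^\<^sub>m 4 = D"
proof -
  note B = assms(2)
  obtain v where v: "v \<in> carrier_vec (4 * k)"
    and cyclic: "\<forall>q. q \<noteq> 0 \<longrightarrow> poly_mat q B *\<^sub>v v = 0\<^sub>v (4 * k) \<longrightarrow> 4 * k \<le> degree q"
    using cyclic_vector_exists[OF B non_derogatory_annihilator_degree[OF B assms(3)]] by blast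
  obtain C P Q where wit: "similar_mat_wit B C P Q"
    and shape: "\<forall>j. Suc j < 4 * k \<longrightarrow> col C j = unit_vec (4 * k) (Suc j)"
    using cyclic_vector_similar_companion_shape[OF B v] cyclic by blast
  have "C \<in> carrier_mat (4 * k) (4 * k)" using similar_mat_witD2[OF B wit] by simp
  moreover have "4 * k = 4 * (k - 2) + 8" using assms(1) by simp
  ultimately have "square_zero_potent_decomposable (4 * k) C"
    using companion_shape_decomposable shape by blast
  then show ?thesis
    using square_zero_potent_decomposable_similar[OF wit B]
    unfolding square_zero_potent_decomposable_def by blast
qed

end
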